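(* There exists a single-pass streaming algorithm that, given a multi-armed bandit instance with $K$ arms arriving in a stream and fixed parameters $T$, $K$ with $T>K$, performs $T$ arm pulls with expected regret $\mathbb{E}[R_T]\leq O(K^{1/3}T^{2/3}\log(K))$ and uses a memory of a single extra arm.
   Context: Single-pass streaming multi-armed bandits: there are $K$ arms, each with an unknown reward distribution (supported on $[0,1]$) with mean $\mu_i$; $\mu^*=\max_i\mu_i$. The arms arrive one by one in a stream in an arbitrary order. The algorithm may only pull arms currently stored in its memory (including the arm currently being read); once an arm is not stored or is discarded, it can never be retrieved. The algorithm performs $T$ arm pulls; if $a_1,\dots,a_T$ are the arms pulled, the regret is $R_T=T\mu^*-\sum_{s=1}^T\mu_{a_s}$ and $\mathbb{E}[R_T]$ is its expectation. The $O(\cdot)$ hides an absolute constant. *)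

theory Defs
  imports "HOL-Probability.Probability"
begin

text \<open>Arms are identified with their
  position in the stream (0,...,K-1); since the arrival order is arbitrary and
  we quantify over all instances, this loses no generality.  At any moment the
  algorithm holds the arm currently being read (position pos, if pos < K) and
  at most ONE extra stored arm (sto).  Discarded arms can never be retrieved.\<close>

datatype action = PullCur | PullSto | AdvKeep | AdvStore
  \<comment> \<open>PullCur: pull the arm currently being read; PullSto: pull the stored arm;
     AdvKeep: read the next arm, discarding the current one;
     AdvStore: read the next arm, storing the current one (discarding the old stored arm)\<close>

datatype event = EvCur real | EvSto real | EvKeep | EvStore

text \<open>A deterministic policy maps the observed history to the next action.
  Randomised algorithms are modelled as a pmf over such policies.\<close>
type_synonym policy = "event list \<Rightarrow> action"

record bstate =
  pos :: nat
  sto :: "nat option"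
  cnt :: "nat \<Rightarrow> nat"
  hist :: "event list"
  pulls :: "nat list"

definition init_state :: bstate where
  "init_state = \<lparr>pos = 0, sto = None, cnt = (\<lambda>_. 0), hist = [], pulls = []\<rparr>"

text \<open>Reward table model: omega (i, j) is the reward obtained at the j-th pull
  of arm i.  Execution returns None if the policy attempts an illegal action.\<close>
primrec exec :: "nat \<Rightarrow> nat \<Rightarrow> policy \<Rightarrow> (nat \<times> nat \<Rightarrow> real) \<Rightarrow> nat \<Rightarrow> bstate \<Rightarrow> bstate option" where
  "exec K T \<pi> \<omega> 0 s = (if T \<le> length (pulls s) then Some s else None)"
| "exec K T \<pi> \<omega> (Suc f) s =
    (if T \<le> length (pulls s) then Some s else
     (case \<pi> (hist s) of
        PullCur \<Rightarrow>
          (if pos s < K then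
             (let i = pos s; r = \<omega> (i, cnt s i) in
              exec K T \<pi> \<omega> f (s\<lparr>cnt := (cnt s)(i := Suc (cnt s i)),
                                  hist := hist s @ [EvCur r], pulls := pulls s @ [i]\<rparr>))
           else None)
      | PullSto \<Rightarrow>
          (case sto s of
             None \<Rightarrow> None
           | Some i \<Rightarrow>
             (let r = \<omega> (i, cnt s i) in
              exec K T \<pi> \<omega> f (s\<lparr>cnt := (cnt s)(i := Suc (cnt s i)),
                                  hist := hist s @ [EvSto r], pulls := pulls s @ [i]\<rparr>)))
      | AdvKeep \<Rightarrow>
          (if pos s < K then exec K T \<pi> \<omega> f (s\<lparr>pos := Suc (pos s), hist := hist s @ [EvKeep]\<rparr>)
           else None)
      | AdvStore \<Rightarrow>
          (if pos s < K then
             exec K T \<pi> \<omega> f (s\<lparr>pos := Suc (pos s), sto := Some (pos s), hist := hist s @ [EvStore]\<rparr>)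
           else None)))"

text \<open>Every step either pulls (at most T times) or advances the stream (at most K
  times), so T + K steps of fuel suffice for any legal policy.\<close>
definition run_pulls :: "nat \<Rightarrow> nat \<Rightarrow> policy \<Rightarrow> (nat \<times> nat \<Rightarrow> real) \<Rightarrow> nat list option" where
  "run_pulls K T \<pi> \<omega> = map_option pulls (exec K T \<pi> \<omega> (T + K) init_state)"

definition valid_policy :: "nat \<Rightarrow> nat \<Rightarrow> policy \<Rightarrow> bool" where
  "valid_policy K T \<pi> \<longleftrightarrow> (\<forall>\<omega>. \<exists>ps. run_pulls K T \<pi> \<omega> = Some ps \<and> length ps = T)"

definition mean :: "real measure \<Rightarrow> real" where
  "mean M = (\<integral>x. x \<partial>M)"

definition mu_star :: "(nat \<Rightarrow> real measure) \<Rightarrow> nat \<Rightarrow> real" where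
  "mu_star D K = Max ((\<lambda>i. mean (D i)) ` {..<K})"

definition regret_of :: "(nat \<Rightarrow> real measure) \<Rightarrow> nat \<Rightarrow> nat \<Rightarrow> nat list \<Rightarrow> real" where
  "regret_of D K T ps = real T * mu_star D K - (\<Sum>s<length ps. mean (D (ps ! s)))"

definition realized_regret :: "(nat \<Rightarrow> real measure) \<Rightarrow> nat \<Rightarrow> nat \<Rightarrow> policy \<Rightarrow> (nat \<times> nat \<Rightarrow> real) \<Rightarrow> real" where
  "realized_regret D K T \<pi> \<omega> =
     (case run_pulls K T \<pi> \<omega> of Some ps \<Rightarrow> regret_of D K T ps | None \<Rightarrow> 0)"

definition reward_space :: "(nat \<Rightarrow> real measure) \<Rightarrow> nat \<Rightarrow> nat \<Rightarrow> (nat \<times> nat \<Rightarrow> real) measure" where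
  "reward_space D K T = PiM ({..<K} \<times> {..<T}) (\<lambda>ij. D (fst ij))"

definition bandit_instance :: "(nat \<Rightarrow> real measure) \<Rightarrow> nat \<Rightarrow> bool" where
  "bandit_instance D K \<longleftrightarrow>
     (\<forall>i<K. prob_space (D i) \<and> sets (D i) = sets borel \<and> (AE x in D i. 0 \<le> x \<and> x \<le> 1))"

end

theory Submission
  imports Defs
begin

text \<open>
  The algorithm is explore-then-commit with a single stored arm.  Every arm of the stream is
  pulled \<open>m \<approx> (T/K)^(2/3)\<close> times when it arrives; the stored arm is replaced whenever the
  new arm has the larger empirical sum, so after the stream the stored arm is the empirical
  best arm (the champion), which is then pulled for the remaining \<open>T - K m\<close> rounds.
  Exploration costs at most \<open>K m\<close>.  For the commit phase, the champion's empirical mean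
  dominates that of a best arm, so its gap is bounded by the largest centred empirical mean.
  By Hoeffding's lemma these are sub-Gaussian with variance proxy \<open>1/(4m)\<close>, and the
  exponential-moment bound on a maximum gives expected gap at most \<open>ln K / l + l / (8 m)\<close>
  for every \<open>l > 0\<close>.  The choice \<open>l = (T/K)^(1/3)\<close> balances the terms.
\<close>

section \<open>Exponential moments in product spaces\<close>

lemma
  fixes M :: "'i \<Rightarrow> 'a measure" and f :: "'i \<Rightarrow> 'a \<Rightarrow> real"
  assumes "finite I" "J \<subseteq> I" "\<And>i. i \<in> I \<Longrightarrow> prob_space (M i)"
    and "\<And>j. j \<in> J \<Longrightarrow> integrable (M j) (f j)"
  shows integrable_PiM_prod_subset: "integrable (Pi\<^sub>M I M) (\<lambda>x. \<Prod>j\<in>J. f j (x j))"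
    and integral_PiM_prod_subset:
      "(\<integral>x. (\<Prod>j\<in>J. f j (x j)) \<partial>Pi\<^sub>M I M) = (\<Prod>j\<in>J. integral\<^sup>L (M j) (f j))"
proof -
  define N where "N i = (if i \<in> I then M i else return (count_space UNIV) undefined)" for i
  have N_prob: "prob_space (N i)" for i
    by (simp add: N_def assms(3) prob_space_return)
  interpret product_prob_space N
    by (intro product_prob_spaceI N_prob)
  have PiM_N: "Pi\<^sub>M I N = Pi\<^sub>M I M"
    by (rule PiM_cong) (simp_all add: N_def)
  define g where "g j = (if j \<in> J then f j else (\<lambda>_. 1))" for j
  have g_int: "integrable (N i) (g i)" for i
  proof (cases "i \<in> J")
    case True
    then show ?thesis
      using assms(2,4) by (auto simp: g_def N_def)
  next
    case False
    then show ?thesis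
      using finite_measure.integrable_const[OF prob_space.finite_measure[OF N_prob]] by (simp add: g_def)
  qed
  have prod_g: "(\<Prod>i\<in>I. h i (g i)) = (\<Prod>j\<in>J. h j (f j))" if "\<And>i. h i (\<lambda>_. 1) = 1"
    for h :: "'i \<Rightarrow> ('a \<Rightarrow> real) \<Rightarrow> real"
    using assms(1,2) that by (intro prod.mono_neutral_cong_right) (auto simp: g_def)
  have integral_N: "integral\<^sup>L (N i) (\<lambda>_. 1) = (1::real)" for i
    by (simp add: M.prob_space)
  have "integrable (Pi\<^sub>M I N) (\<lambda>x. \<Prod>i\<in>I. g i (x i))"
    using assms(1) g_int by (rule product_integrable_prod)
  then show "integrable (Pi\<^sub>M I M) (\<lambda>x. \<Prod>j\<in>J. f j (x j))"
    using prod_g[of "\<lambda>i u. u (x i)" for x] by (simp add: PiM_N)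
  have "(\<integral>x. (\<Prod>i\<in>I. g i (x i)) \<partial>Pi\<^sub>M I N) = (\<Prod>i\<in>I. integral\<^sup>L (N i) (g i))"
    using assms(1) g_int by (rule product_integral_prod)
  also have "\<dots> = (\<Prod>j\<in>J. integral\<^sup>L (N j) (f j))"
    using prod_g[of "\<lambda>i. integral\<^sup>L (N i)"] integral_N by simp
  also have "\<dots> = (\<Prod>j\<in>J. integral\<^sup>L (M j) (f j))"
    using assms(2) by (intro prod.cong) (auto simp: N_def)
  finally show "(\<integral>x. (\<Prod>j\<in>J. f j (x j)) \<partial>Pi\<^sub>M I M) = (\<Prod>j\<in>J. integral\<^sup>L (M j) (f j))"
    using prod_g[of "\<lambda>i u. u (x i)" for x] by (simp add: PiM_N)
qed

lemma Hoeffding_mgf_PiM_sum: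
  fixes M :: "'i \<Rightarrow> real measure"
  assumes "finite I" "J \<subseteq> I" "\<And>i. i \<in> I \<Longrightarrow> prob_space (M i)" "0 < l"
    and borel: "\<And>j. j \<in> J \<Longrightarrow> sets (M j) = sets borel"
    and bounded: "\<And>j. j \<in> J \<Longrightarrow> AE x in M j. a \<le> x \<and> x \<le> b"
  shows "integrable (Pi\<^sub>M I M) (\<lambda>x. exp (l * (\<Sum>j\<in>J. x j - (\<integral>y. y \<partial>M j))))"
    and "(\<integral>x. exp (l * (\<Sum>j\<in>J. x j - (\<integral>y. y \<partial>M j))) \<partial>Pi\<^sub>M I M)
      \<le> exp (l\<^sup>2 * (b - a)\<^sup>2 / 8) ^ card J"
proof -
  define f where "f j y = exp (l * (y - (\<integral>y. y \<partial>M j)))" for j y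
  have exp_sum: "exp (l * (\<Sum>j\<in>J. x j - (\<integral>y. y \<partial>M j))) = (\<Prod>j\<in>J. f j (x j))" for x
    using finite_subset[OF assms(2,1)] by (simp add: f_def sum_distrib_left exp_sum)
  have f_nonneg: "0 \<le> f j y" for j y
    by (simp add: f_def)
  have Hoeffding: "integrable (M j) (f j) \<and> integral\<^sup>L (M j) (f j) \<le> exp (l\<^sup>2 * (b - a)\<^sup>2 / 8)"
    if j: "j \<in> J" for j
  proof -
    interpret prob_space "M j"
      using assms(2,3) j by blast
    interpret interval_bounded_random_variable "M j" "\<lambda>y. y" a b
    proof
      show "(\<lambda>y. y) \<in> borel_measurable (M j)"
        by (simp add: measurable_cong_sets[OF borel[OF j] refl])
      show "AE y in M j. y \<in> {a..b}"
        using bounded[OF j] by eventually_elim simp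
    qed
    have int: "integrable (M j) (f j)"
    proof (rule integrable_const_bound)
      show "AE y in M j. norm (f j y) \<le> exp (l * (b - (\<integral>y. y \<partial>M j)))"
        using AE_in_interval by eventually_elim (use assms(4) in \<open>simp add: f_def\<close>)
    qed (unfold f_def, measurable)
    have "ennreal (integral\<^sup>L (M j) (f j)) = (\<integral>\<^sup>+y. f j y \<partial>M j)"
      using int f_nonneg by (intro nn_integral_eq_integral[symmetric]) auto
    also have "\<dots> \<le> ennreal (exp (l\<^sup>2 * (b - a)\<^sup>2 / 8))"
      unfolding f_def by (rule Hoeffdings_lemma_nn_integral[OF assms(4)])
    finally show ?thesis
      using int by simp
  qed
  show "integrable (Pi\<^sub>M I M) (\<lambda>x. exp (l * (\<Sum>j\<in>J. x j - (\<integral>y. y \<partial>M j))))"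
    unfolding exp_sum using assms(1-3) Hoeffding by (intro integrable_PiM_prod_subset) auto
  have "(\<integral>x. exp (l * (\<Sum>j\<in>J. x j - (\<integral>y. y \<partial>M j))) \<partial>Pi\<^sub>M I M)
      = (\<Prod>j\<in>J. integral\<^sup>L (M j) (f j))"
    unfolding exp_sum using assms(1-3) Hoeffding by (intro integral_PiM_prod_subset) auto
  also have "\<dots> \<le> (\<Prod>j\<in>J. exp (l\<^sup>2 * (b - a)\<^sup>2 / 8))"
    using Hoeffding f_nonneg by (intro prod_mono conjI integral_nonneg) auto
  finally show "(\<integral>x. exp (l * (\<Sum>j\<in>J. x j - (\<integral>y. y \<partial>M j))) \<partial>Pi\<^sub>M I M)
      \<le> exp (l\<^sup>2 * (b - a)\<^sup>2 / 8) ^ card J"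
    by simp
qed

lemma (in prob_space) integral_le_ln_sum_mgf_bound:
  fixes Y :: "'i \<Rightarrow> 'a \<Rightarrow> real" and B :: real
  assumes "finite I" "0 < l" "0 < B"
    and mgf_integrable: "\<And>i. i \<in> I \<Longrightarrow> integrable M (\<lambda>x. exp (l * Y i x))"
    and mgf_le: "\<And>i. i \<in> I \<Longrightarrow> (\<integral>x. exp (l * Y i x) \<partial>M) \<le> B"
    and "integrable M Z"
    and dominated: "\<And>x. x \<in> space M \<Longrightarrow> \<exists>i\<in>I. Z x \<le> Y i x"
  shows "(\<integral>x. Z x \<partial>M) \<le> ln (real (card I) * B) / l"
proof -
  have "I \<noteq> {}"
    using dominated not_empty by blast
  define c where "c = real (card I) * B"
  have "0 < c"
    unfolding c_def using \<open>finite I\<close> \<open>I \<noteq> {}\<close> \<open>0 < B\<close>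
    by (intro mult_pos_pos) (simp_all add: card_gt_0_iff)
  \<comment> \<open>\<open>R\<close> linearises the soft maximum \<open>ln (\<Sum>i\<in>I. exp (l * Y i x)) / l\<close> by \<open>1 + t \<le> exp t\<close>\<close>
  define R where "R x = (ln c - 1) / l + (\<Sum>i\<in>I. exp (l * Y i x)) / (c * l)" for x
  have sum_integrable: "integrable M (\<lambda>x. \<Sum>i\<in>I. exp (l * Y i x))"
    using mgf_integrable by (rule Bochner_Integration.integrable_sum)
  have "Z x \<le> R x" if x: "x \<in> space M" for x
  proof -
    obtain i where "i \<in> I" "Z x \<le> Y i x"
      using dominated[OF x] by blast
    have "l * Z x \<le> l * Y i x"
      using \<open>Z x \<le> Y i x\<close> \<open>0 < l\<close> by simp
    also have "\<dots> \<le> ln c - 1 + exp (l * Y i x) / c"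
      using exp_ge_add_one_self[of "l * Y i x - ln c"] \<open>0 < c\<close> by (simp add: exp_diff)
    also have "\<dots> \<le> ln c - 1 + (\<Sum>i\<in>I. exp (l * Y i x)) / c"
      using \<open>finite I\<close> \<open>i \<in> I\<close> \<open>0 < c\<close>
      by (intro add_left_mono divide_right_mono member_le_sum) auto
    finally have "Z x \<le> (ln c - 1 + (\<Sum>i\<in>I. exp (l * Y i x)) / c) / l"
      using \<open>0 < l\<close> by (simp add: pos_le_divide_eq mult.commute)
    then show ?thesis
      by (simp add: R_def add_divide_distrib)
  qed
  then have "(\<integral>x. Z x \<partial>M) \<le> (\<integral>x. R x \<partial>M)"
    using \<open>integrable M Z\<close> sum_integrable by (intro integral_mono) (auto simp: R_def)
  also have "\<dots> = (ln c - 1) / l + (\<Sum>i\<in>I. \<integral>x. exp (l * Y i x) \<partial>M) / (c * l)"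
    using sum_integrable mgf_integrable by (simp add: R_def prob_space)
  also have "\<dots> \<le> (ln c - 1) / l + (\<Sum>i\<in>I. B) / (c * l)"
    using mgf_le \<open>0 < l\<close> \<open>0 < c\<close> by (intro add_left_mono divide_right_mono sum_mono) auto
  also have "\<dots> = ln c / l"
    using \<open>0 < l\<close> \<open>0 < c\<close> by (simp add: c_def[symmetric] diff_divide_distrib)
  finally show ?thesis
    by (simp add: c_def)
qed

section \<open>The explore-then-commit policy\<close>

definition arm_sum :: "nat \<Rightarrow> (nat \<times> nat \<Rightarrow> real) \<Rightarrow> nat \<Rightarrow> real" where
  "arm_sum m \<omega> i = (\<Sum>j<m. \<omega> (i, j))"

fun champion :: "nat \<Rightarrow> (nat \<times> nat \<Rightarrow> real) \<Rightarrow> nat \<Rightarrow> nat" where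
  "champion m \<omega> 0 = 0"
| "champion m \<omega> (Suc n) =
     (if arm_sum m \<omega> (champion m \<omega> n) < arm_sum m \<omega> n then n else champion m \<omega> n)"

lemma champion_less: "0 < n \<Longrightarrow> champion m \<omega> n < n"
  by (induction n) (auto simp: less_Suc_eq)

lemma arm_sum_le_champion: "i < n \<Longrightarrow> arm_sum m \<omega> i \<le> arm_sum m \<omega> (champion m \<omega> n)"
  by (induction n) (auto simp: less_Suc_eq)

text \<open>What the policy remembers of the history: the stream position, the number of pulls of
  the current arm and their reward sum, and the reward sum of the stored arm.\<close>

type_synonym etc_summary = "nat \<times> nat \<times> real \<times> real option"

definition etc_start :: etc_summary where
  "etc_start = (0, 0, 0, None)"

fun etc_update :: "event \<Rightarrow> etc_summary \<Rightarrow> etc_summary" where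
  "etc_update (EvCur r) (p, k, s, b) = (p, Suc k, s + r, b)"
| "etc_update (EvSto r) x = x"
| "etc_update EvKeep (p, k, s, b) = (Suc p, 0, 0, b)"
| "etc_update EvStore (p, k, s, b) = (Suc p, 0, 0, Some s)"

fun etc_action :: "nat \<Rightarrow> nat \<Rightarrow> etc_summary \<Rightarrow> action" where
  "etc_action K m (p, k, s, b) =
     (if K \<le> p then PullSto
      else if k < m then PullCur
      else if (case b of None \<Rightarrow> True | Some b' \<Rightarrow> b' < s) then AdvStore
      else AdvKeep)"

definition etc_policy :: "nat \<Rightarrow> nat \<Rightarrow> policy" where
  "etc_policy K m h = etc_action K m (fold etc_update h etc_start)"

abbreviation etc_exec ::
    "nat \<Rightarrow> nat \<Rightarrow> nat \<Rightarrow> (nat \<times> nat \<Rightarrow> real) \<Rightarrow> nat \<Rightarrow> bstate \<Rightarrow> bstate option" where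
  "etc_exec K T m \<equiv> exec K T (etc_policy K m)"

definition explore_pulls :: "nat \<Rightarrow> nat \<Rightarrow> nat list" where
  "explore_pulls m i = concat (map (\<lambda>j. replicate m j) [0..<i])"

lemma explore_pulls_0 [simp]: "explore_pulls m 0 = []"
  by (simp add: explore_pulls_def)

lemma explore_pulls_Suc: "explore_pulls m (Suc i) = explore_pulls m i @ replicate m i"
  by (simp add: explore_pulls_def)

lemma length_explore_pulls [simp]: "length (explore_pulls m i) = i * m"
  by (induction i) (simp_all add: explore_pulls_Suc)

lemma sum_list_map_explore_pulls:
  "sum_list (map f (explore_pulls m K)) = of_nat m * (\<Sum>i<K. f i :: real)"
  by (induction K) (simp_all add: explore_pulls_Suc sum_list_replicate algebra_simps)

definition exploring :: "nat \<Rightarrow> (nat \<times> nat \<Rightarrow> real) \<Rightarrow> nat \<Rightarrow> nat \<Rightarrow> bstate \<Rightarrow> bool" where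
  "exploring m \<omega> i k st \<longleftrightarrow>
     pos st = i \<and> cnt st = (\<lambda>j. if j < i then m else if j = i then k else 0) \<and>
     pulls st = explore_pulls m i @ replicate k i \<and>
     sto st = (if i = 0 then None else Some (champion m \<omega> i)) \<and>
     fold etc_update (hist st) etc_start = (i, k, \<Sum>j<k. \<omega> (i, j), map_option (arm_sum m \<omega>) (sto st))"

definition committed :: "nat \<Rightarrow> nat \<Rightarrow> (nat \<times> nat \<Rightarrow> real) \<Rightarrow> nat \<Rightarrow> bstate \<Rightarrow> bool" where
  "committed K m \<omega> n st \<longleftrightarrow>
     sto st = Some (champion m \<omega> K) \<and> fst (fold etc_update (hist st) etc_start) = K \<and>
     pulls st = explore_pulls m K @ replicate n (champion m \<omega> K)"

lemma exploring_start: "exploring m \<omega> 0 0 init_state"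
  by (simp add: exploring_def init_state_def etc_start_def fun_eq_iff)

lemma committed_of_exploring: "0 < K \<Longrightarrow> exploring m \<omega> K 0 st \<Longrightarrow> committed K m \<omega> 0 st"
  by (simp add: exploring_def committed_def)

lemma etc_exec_pull_current:
  assumes "exploring m \<omega> i k st" "i < K" "k < m" "K * m < T"
  shows "\<exists>st'. etc_exec K T m \<omega> (Suc f) st = etc_exec K T m \<omega> f st' \<and>
    exploring m \<omega> i (Suc k) st'"
proof -
  have "i * m + k < Suc i * m"
    using assms(3) by simp
  also have "\<dots> \<le> K * m"
    using assms(2) by (intro mult_right_mono) auto
  finally have "\<not> T \<le> length (pulls st)"
    using assms(1,4) by (simp add: exploring_def)
  moreover have "etc_policy K m (hist st) = PullCur"
    using assms(1-3) by (simp add: exploring_def etc_policy_def)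
  ultimately show ?thesis
    using assms(1,2)
    by (auto simp: exploring_def fun_eq_iff replicate_append_same[symmetric])
qed

lemma etc_exec_explore_arm:
  assumes "exploring m \<omega> i 0 st" "i < K" "K * m < T" "k \<le> m"
  shows "\<exists>st'. etc_exec K T m \<omega> (f + k) st = etc_exec K T m \<omega> f st' \<and>
    exploring m \<omega> i k st'"
  using assms(4)
proof (induction k arbitrary: f)
  case 0
  then show ?case
    using assms(1) by auto
next
  case (Suc k)
  obtain st' where st': "etc_exec K T m \<omega> (Suc f + k) st = etc_exec K T m \<omega> (Suc f) st'"
    "exploring m \<omega> i k st'"
    using Suc.IH[of "Suc f"] Suc.prems by (meson Suc_leD)
  obtain st'' where "etc_exec K T m \<omega> (Suc f) st' = etc_exec K T m \<omega> f st''"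
    "exploring m \<omega> i (Suc k) st''"
    using etc_exec_pull_current[OF st'(2) assms(2) _ assms(3)] Suc.prems by (metis Suc_le_lessD)
  with st'(1) show ?case
    by (simp only: add_Suc add_Suc_right) blast
qed

lemma etc_exec_advance:
  assumes "exploring m \<omega> i m st" "i < K" "K * m < T"
  shows "\<exists>st'. etc_exec K T m \<omega> (Suc f) st = etc_exec K T m \<omega> f st' \<and>
    exploring m \<omega> (Suc i) 0 st'"
proof -
  have "i * m + m \<le> K * m"
    using assms(2) mult_right_mono[of "Suc i" K m] by simp
  then have "\<not> T \<le> length (pulls st)"
    using assms(1,3) by (simp add: exploring_def)
  moreover have "(\<lambda>j. if j < i then m else if j = i then m else 0) =
      (\<lambda>j. if j < Suc i then m else if j = Suc i then 0 else (0::nat))"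
    by (auto simp: fun_eq_iff)
  ultimately show ?thesis
    using assms(1,2)
    by (auto simp: exploring_def etc_policy_def explore_pulls_Suc arm_sum_def)
qed

lemma etc_exec_explore_all:
  assumes "exploring m \<omega> i 0 st" "i \<le> K" "K * m < T"
  shows "\<exists>st'. etc_exec K T m \<omega> (f + (K - i) * Suc m) st = etc_exec K T m \<omega> f st' \<and>
    exploring m \<omega> K 0 st'"
  using assms(1,2)
proof (induction "K - i" arbitrary: i st)
  case 0
  then show ?case
    by auto
next
  case (Suc d)
  then have "i < K" "d = K - Suc i"
    by simp_all
  have fuel: "f + (K - i) * Suc m = Suc (f + d * Suc m) + m"
    by (simp only: Suc.hyps(2)[symmetric]) simp
  obtain st1 where st1: "etc_exec K T m \<omega> (Suc (f + d * Suc m) + m) st =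
      etc_exec K T m \<omega> (Suc (f + d * Suc m)) st1" "exploring m \<omega> i m st1"
    using etc_exec_explore_arm[OF Suc.prems(1) \<open>i < K\<close> assms(3) le_refl] by blast
  obtain st2 where st2: "etc_exec K T m \<omega> (Suc (f + d * Suc m)) st1 =
      etc_exec K T m \<omega> (f + d * Suc m) st2" "exploring m \<omega> (Suc i) 0 st2"
    using etc_exec_advance[OF st1(2) \<open>i < K\<close> assms(3)] by blast
  obtain st3 where st3: "etc_exec K T m \<omega> (f + (K - Suc i) * Suc m) st2 =
      etc_exec K T m \<omega> f st3" "exploring m \<omega> K 0 st3"
    using Suc.hyps(1)[OF \<open>d = K - Suc i\<close> st2(2)] \<open>i < K\<close> by auto
  have "etc_exec K T m \<omega> (f + (K - i) * Suc m) st = etc_exec K T m \<omega> f st3"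
    unfolding fuel st1(1) st2(1) using st3(1) by (simp only: \<open>d = K - Suc i\<close>)
  with st3(2) show ?case
    by blast
qed

lemma etc_exec_commit:
  assumes "committed K m \<omega> n st" "K * m + n \<le> T" "T - K * m - n \<le> f"
  shows "\<exists>st'. etc_exec K T m \<omega> f st = Some st' \<and>
    pulls st' = explore_pulls m K @ replicate (T - K * m) (champion m \<omega> K)"
  using assms
proof (induction f arbitrary: n st)
  case 0
  then show ?case
    by (auto simp: committed_def)
next
  case (Suc f)
  show ?case
  proof (cases "T \<le> length (pulls st)")
    case True
    with Suc.prems show ?thesis
      by (auto simp: committed_def)
  next
    case False
    define c where "c = champion m \<omega> K"
    define st' where "st' = st\<lparr>cnt := (cnt st)(c := Suc (cnt st c)),
      hist := hist st @ [EvSto (\<omega> (c, cnt st c))], pulls := pulls st @ [c]\<rparr>"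
    have "etc_policy K m (hist st) = PullSto"
      using Suc.prems(1)
      by (cases "fold etc_update (hist st) etc_start") (simp add: committed_def etc_policy_def)
    then have step: "etc_exec K T m \<omega> (Suc f) st = etc_exec K T m \<omega> f st'"
      using False Suc.prems(1) by (simp add: committed_def st'_def c_def)
    have "committed K m \<omega> (Suc n) st'"
      using Suc.prems(1) by (simp add: committed_def st'_def c_def replicate_append_same[symmetric])
    moreover have "K * m + Suc n \<le> T"
      using False Suc.prems(1) by (simp add: committed_def)
    moreover have "T - K * m - Suc n \<le> f"
      using Suc.prems(3) by simp
    ultimately show ?thesis
      unfolding step by (rule Suc.IH)
  qed
qed

lemma run_pulls_etc_policy:
  assumes "0 < K" "K * m < T"
  shows "run_pulls K T (etc_policy K m) \<omega> = Some (explore_pulls m K @ replicate (T - K * m) (champion m \<omega> K))"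
proof -
  have fuel: "T + K = T - K * m + (K - 0) * Suc m"
    using assms(2) by simp
  obtain st where st: "etc_exec K T m \<omega> (T + K) init_state =
      etc_exec K T m \<omega> (T - K * m) st" "exploring m \<omega> K 0 st"
    unfolding fuel using etc_exec_explore_all[OF exploring_start _ assms(2)] by blast
  obtain st' where "etc_exec K T m \<omega> (T - K * m) st = Some st'"
    "pulls st' = explore_pulls m K @ replicate (T - K * m) (champion m \<omega> K)"
    using etc_exec_commit[OF committed_of_exploring[OF assms(1) st(2)], of T "T - K * m"] assms(2)
    by auto
  with st(1) show ?thesis
    by (simp add: run_pulls_def)
qed

lemma valid_policy_etc_policy: "0 < K \<Longrightarrow> K * m < T \<Longrightarrow> valid_policy K T (etc_policy K m)"
  by (simp add: valid_policy_def run_pulls_etc_policy)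

section \<open>Regret analysis\<close>

locale etc_run =
  fixes D :: "nat \<Rightarrow> real measure" and K T m :: nat
  assumes bandit: "bandit_instance D K"
    and arms_pos: "0 < K" and explore_pos: "0 < m" and explore_lt: "K * m < T"
begin

abbreviation rewards :: "(nat \<times> nat \<Rightarrow> real) measure" where
  "rewards \<equiv> reward_space D K T"

abbreviation mu :: "nat \<Rightarrow> real" where
  "mu i \<equiv> mean (D i)"

lemma arm_prob_space: "i < K \<Longrightarrow> prob_space (D i)"
  and arm_sets: "i < K \<Longrightarrow> sets (D i) = sets borel"
  and arm_bounded: "i < K \<Longrightarrow> AE x in D i. 0 \<le> x \<and> x \<le> 1"
  using bandit by (simp_all add: bandit_instance_def)

sublocale prob_space rewards
  unfolding reward_space_def by (rule prob_space_PiM) (auto intro: arm_prob_space)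

lemma explore_le: "m \<le> T"
proof -
  have "m \<le> K * m"
    using arms_pos by simp
  with explore_lt show ?thesis
    by linarith
qed

lemma mean_bounds:
  assumes "i < K"
  shows "0 \<le> mu i" "mu i \<le> 1"
proof -
  interpret arm: prob_space "D i"
    by (rule arm_prob_space[OF assms])
  have "integrable (D i) (\<lambda>x. x)"
    using arm_bounded[OF assms]
    by (intro arm.integrable_const_bound[where B = 1])
      (auto simp: measurable_cong_sets[OF arm_sets[OF assms] refl])
  then show "0 \<le> mu i" "mu i \<le> 1"
    unfolding mean_def using arm_bounded[OF assms]
    by (auto intro!: arm.integral_ge_const arm.integral_le_const elim: eventually_mono)
qed

lemma mu_le_mu_star: "i < K \<Longrightarrow> mu i \<le> mu_star D K"
  unfolding mu_star_def by (intro Max_ge) auto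

lemma best_arm:
  obtains i where "i < K" "mu i = mu_star D K"
proof -
  have "mu_star D K \<in> mu ` {..<K}"
    unfolding mu_star_def using arms_pos by (intro Max_in) auto
  then show thesis
    using that by auto
qed

lemma reward_measurable_arm:
  assumes "i < K" "j < T"
  shows "(\<lambda>\<omega>. \<omega> (i, j)) \<in> measurable rewards (D i)"
proof -
  have "(\<lambda>\<omega>. \<omega> (i, j)) \<in> measurable rewards (D (fst (i, j)))"
    unfolding reward_space_def by (rule measurable_component_singleton) (use assms in simp)
  then show ?thesis
    by simp
qed

lemma reward_measurable [measurable]:
  assumes "i < K" "j < T"
  shows "(\<lambda>\<omega>. \<omega> (i, j)) \<in> borel_measurable rewards"
  using reward_measurable_arm[OF assms] unfolding measurable_cong_sets[OF refl arm_sets[OF assms(1)]] .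

lemma reward_integral:
  assumes "i < K" "j < T"
  shows "integrable rewards (\<lambda>\<omega>. \<omega> (i, j))" "(\<integral>\<omega>. \<omega> (i, j) \<partial>rewards) = mu i"
proof -
  have bounded: "AE \<omega> in rewards. 0 \<le> \<omega> (i, j) \<and> \<omega> (i, j) \<le> 1"
    unfolding reward_space_def
    by (rule AE_PiM_component[of _ _ "(i, j)"]) (use assms arm_bounded in \<open>auto intro: arm_prob_space\<close>)
  show "integrable rewards (\<lambda>\<omega>. \<omega> (i, j))"
  proof (rule integrable_const_bound[where B = 1])
    show "AE \<omega> in rewards. norm (\<omega> (i, j)) \<le> 1"
      using bounded by eventually_elim simp
    show "(\<lambda>\<omega>. \<omega> (i, j)) \<in> borel_measurable rewards"
      by (rule reward_measurable[OF assms])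
  qed
  have "distr rewards (D (fst (i, j))) (\<lambda>\<omega>. \<omega> (i, j)) = D (fst (i, j))"
    unfolding reward_space_def by (rule distr_PiM_component) (use assms in \<open>auto intro: arm_prob_space\<close>)
  moreover have "(\<integral>x. x \<partial>distr rewards (D i) (\<lambda>\<omega>. \<omega> (i, j))) = (\<integral>\<omega>. \<omega> (i, j) \<partial>rewards)"
    by (rule integral_distr[OF reward_measurable_arm[OF assms] measurable_ident_sets[OF arm_sets[OF assms(1)]]])
  ultimately show "(\<integral>\<omega>. \<omega> (i, j) \<partial>rewards) = mu i"
    by (simp add: mean_def)
qed

definition arm_deviation :: "nat \<Rightarrow> (nat \<times> nat \<Rightarrow> real) \<Rightarrow> real" where
  "arm_deviation i \<omega> = arm_sum m \<omega> i / m - mu i"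

lemma arm_deviation_integral:
  assumes "i < K"
  shows "integrable rewards (arm_deviation i)" "(\<integral>\<omega>. arm_deviation i \<omega> \<partial>rewards) = 0"
proof -
  have j: "j < m \<Longrightarrow> j < T" for j
    using explore_le by simp
  have "integrable rewards (\<lambda>\<omega>. arm_sum m \<omega> i)"
    unfolding arm_sum_def using reward_integral(1)[OF assms j] by auto
  then show "integrable rewards (arm_deviation i)"
    unfolding arm_deviation_def[abs_def] by auto
  have "(\<integral>\<omega>. arm_sum m \<omega> i \<partial>rewards) = m * mu i"
    unfolding arm_sum_def using reward_integral[OF assms j] by (subst Bochner_Integration.integral_sum) auto
  then show "(\<integral>\<omega>. arm_deviation i \<omega> \<partial>rewards) = 0"
    unfolding arm_deviation_def using \<open>integrable rewards (\<lambda>\<omega>. arm_sum m \<omega> i)\<close> explore_pos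
    by (simp add: prob_space)
qed

lemma arm_deviation_mgf:
  assumes "i < K" "0 < l"
  shows "integrable rewards (\<lambda>\<omega>. exp (l * arm_deviation i \<omega>))"
    "(\<integral>\<omega>. exp (l * arm_deviation i \<omega>) \<partial>rewards) \<le> exp (l\<^sup>2 / (8 * m))"
proof -
  let ?J = "{i} \<times> {..<m}"
  have "?J = Pair i ` {..<m}"
    by auto
  then have sum_J: "(\<Sum>ij\<in>?J. g ij) = (\<Sum>j<m. g (i, j))" for g :: "nat \<times> nat \<Rightarrow> real"
    by (simp add: sum.reindex inj_on_def)
  have exponent: "l * arm_deviation i \<omega> = l / m * (\<Sum>ij\<in>?J. \<omega> ij - (\<integral>x. x \<partial>D (fst ij)))" for \<omega>
    using explore_pos by (simp add: sum_J arm_deviation_def arm_sum_def mean_def sum_subtractf field_simps)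
  have "?J \<subseteq> {..<K} \<times> {..<T}"
    using assms(1) explore_le by auto
  note Hoeffding = Hoeffding_mgf_PiM_sum[OF _ this, of "\<lambda>ij. D (fst ij)" "l / m" 0 1]
  have arm_J: "fst ij < K" if "ij \<in> ?J" for ij
    using assms(1) that by auto
  have hyps: "finite ({..<K} \<times> {..<T})"
    "\<And>ij. ij \<in> {..<K} \<times> {..<T} \<Longrightarrow> prob_space (D (fst ij))" "0 < l / m"
    "\<And>ij. ij \<in> ?J \<Longrightarrow> sets (D (fst ij)) = sets borel"
    "\<And>ij. ij \<in> ?J \<Longrightarrow> AE x in D (fst ij). 0 \<le> x \<and> x \<le> 1"
    using assms(2) explore_pos arm_prob_space arm_sets[OF arm_J] arm_bounded[OF arm_J] by auto
  show "integrable rewards (\<lambda>\<omega>. exp (l * arm_deviation i \<omega>))"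
    unfolding exponent reward_space_def by (rule Hoeffding(1)[OF hyps])
  have "(\<integral>\<omega>. exp (l * arm_deviation i \<omega>) \<partial>rewards) \<le> exp ((l / m)\<^sup>2 * (1 - 0)\<^sup>2 / 8) ^ card ?J"
    unfolding exponent reward_space_def by (rule Hoeffding(2)[OF hyps])
  also have "\<dots> = exp (l\<^sup>2 / (8 * m))"
    using explore_pos by (simp add: card_cartesian_product exp_of_nat_mult[symmetric] power2_eq_square)
  finally show "(\<integral>\<omega>. exp (l * arm_deviation i \<omega>) \<partial>rewards) \<le> exp (l\<^sup>2 / (8 * m))" .
qed

lemma arm_sum_measurable [measurable]:
  "i < K \<Longrightarrow> (\<lambda>\<omega>. arm_sum m \<omega> i) \<in> borel_measurable rewards"
  using explore_le unfolding arm_sum_def by (intro borel_measurable_sum reward_measurable) auto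

lemma champion_measurable:
  "n \<le> K \<Longrightarrow> (\<lambda>\<omega>. champion m \<omega> n) \<in> measurable rewards (count_space {..<K})"
proof (induction n)
  case 0
  then show ?case
    using arms_pos by simp
next
  case (Suc n)
  then have IH: "(\<lambda>\<omega>. champion m \<omega> n) \<in> measurable rewards (count_space {..<K})"
    by simp
  have "(\<lambda>\<omega>. arm_sum m \<omega> (champion m \<omega> n)) \<in> borel_measurable rewards"
    by (rule measurable_compose_countable'[OF _ IH]) auto
  moreover have "(\<lambda>\<omega>. arm_sum m \<omega> n) \<in> borel_measurable rewards"
    using Suc.prems by simp
  ultimately have "{\<omega> \<in> space rewards. arm_sum m \<omega> (champion m \<omega> n) < arm_sum m \<omega> n} \<in> sets rewards"
    by measurable
  then show ?case
    using IH Suc.prems by simp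
qed

lemma champion_mean_measurable [measurable]: "(\<lambda>\<omega>. mu (champion m \<omega> K)) \<in> borel_measurable rewards"
  by (rule measurable_compose[OF champion_measurable]) auto

lemma gap_bounds:
  assumes "i < K"
  shows "0 \<le> mu_star D K - mu i" "mu_star D K - mu i \<le> 1"
proof -
  obtain i' where "i' < K" "mu i' = mu_star D K"
    by (rule best_arm)
  then show "0 \<le> mu_star D K - mu i" "mu_star D K - mu i \<le> 1"
    using assms mu_le_mu_star mean_bounds by force+
qed

lemma realized_regret_etc_policy:
  "realized_regret D K T (etc_policy K m) \<omega> =
     m * (\<Sum>i<K. mu_star D K - mu i) + (T - K * m) * (mu_star D K - mu (champion m \<omega> K))"
proof -
  have sum_nth: "(\<Sum>s<length ps. mu (ps ! s)) = sum_list (map mu ps)" for ps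
    by (simp add: sum_list_sum_nth atLeast0LessThan)
  have "realized_regret D K T (etc_policy K m) \<omega> =
      T * mu_star D K - (m * (\<Sum>i<K. mu i) + (T - K * m) * mu (champion m \<omega> K))"
    unfolding realized_regret_def regret_of_def run_pulls_etc_policy[OF arms_pos explore_lt] option.case sum_nth
    by (simp add: sum_list_map_explore_pulls sum_list_replicate)
  also have "\<dots> = m * (\<Sum>i<K. mu_star D K - mu i) + (T - K * m) * (mu_star D K - mu (champion m \<omega> K))"
    using explore_lt by (simp add: sum_subtractf algebra_simps)
  finally show ?thesis .
qed

lemma realized_regret_measurable: "realized_regret D K T (etc_policy K m) \<in> borel_measurable rewards"
  unfolding realized_regret_etc_policy[abs_def] by simp

lemma realized_regret_single_arm:
  assumes "K = 1"
  shows "realized_regret D K T (etc_policy K m) \<omega> = 0"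
  unfolding realized_regret_etc_policy using champion_less[of K m \<omega>] assms
  by (simp add: mu_star_def lessThan_Suc)

lemma champion_gap_integrable: "integrable rewards (\<lambda>\<omega>. mu_star D K - mu (champion m \<omega> K))"
proof (rule integrable_const_bound[where B = 1])
  show "AE \<omega> in rewards. norm (mu_star D K - mu (champion m \<omega> K)) \<le> 1"
    using gap_bounds[OF champion_less[OF arms_pos]] by simp
qed simp

lemma expected_champion_gap_le:
  assumes "0 < l"
  shows "(\<integral>\<omega>. mu_star D K - mu (champion m \<omega> K) \<partial>rewards) \<le> ln K / l + l / (8 * m)"
proof -
  obtain b where b: "b < K" "mu b = mu_star D K"
    by (rule best_arm)
  have champion: "champion m \<omega> K < K" for \<omega>
    using arms_pos by (rule champion_less)
  define Z where "Z \<omega> = mu_star D K - mu (champion m \<omega> K) + arm_deviation b \<omega>" for \<omega>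
  \<comment> \<open>the champion's empirical mean is at least that of the best arm \<open>b\<close>\<close>
  have "Z \<omega> \<le> arm_deviation (champion m \<omega> K) \<omega>" for \<omega>
    using arm_sum_le_champion[OF b(1), of m \<omega>] explore_pos b(2)
    by (simp add: Z_def arm_deviation_def divide_right_mono)
  then have dominated: "\<exists>i\<in>{..<K}. Z \<omega> \<le> arm_deviation i \<omega>" for \<omega>
    using champion by blast
  have "integrable rewards Z"
    unfolding Z_def[abs_def] using champion_gap_integrable arm_deviation_integral(1)[OF b(1)] by simp
  then have "(\<integral>\<omega>. Z \<omega> \<partial>rewards) \<le> ln (real (card {..<K}) * exp (l\<^sup>2 / (8 * m))) / l"
    using assms arm_deviation_mgf dominated
    by (intro integral_le_ln_sum_mgf_bound[where Y = arm_deviation]) auto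
  also have "\<dots> = ln K / l + l / (8 * m)"
    using assms arms_pos by (simp add: ln_mult add_divide_distrib power2_eq_square)
  finally show ?thesis
    using champion_gap_integrable arm_deviation_integral[OF b(1)] by (simp add: Z_def)
qed

lemma expected_regret_le:
  assumes "0 < l"
  shows "(\<integral>\<omega>. realized_regret D K T (etc_policy K m) \<omega> \<partial>rewards)
    \<le> real m * K + T * (ln K / l + l / (8 * real m))"
proof -
  have "(\<Sum>i<K. mu_star D K - mu i) \<le> (\<Sum>i<K. 1)"
    using gap_bounds by (intro sum_mono) auto
  then have "m * (\<Sum>i<K. mu_star D K - mu i) \<le> m * K"
    by (simp add: mult_left_mono)
  moreover have "(T - K * m) * (\<integral>\<omega>. mu_star D K - mu (champion m \<omega> K) \<partial>rewards) \<le>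
      (T - K * m) * (ln K / l + l / (8 * m))"
    using expected_champion_gap_le[OF assms] by (simp add: mult_left_mono)
  moreover have "real (T - K * m) * (ln K / l + l / (8 * m)) \<le> T * (ln K / l + l / (8 * m))"
    using assms arms_pos by (intro mult_right_mono) auto
  ultimately show ?thesis
    unfolding realized_regret_etc_policy using champion_gap_integrable by (simp add: prob_space)
qed

end

section \<open>Choice of the exploration length\<close>

lemma nat_floor_bounds:
  fixes x :: real
  assumes "1 \<le> x"
  shows "0 < nat \<lfloor>x\<rfloor>" "real (nat \<lfloor>x\<rfloor>) \<le> x" "x \<le> 2 * real (nat \<lfloor>x\<rfloor>)"
proof -
  have "1 \<le> \<lfloor>x\<rfloor>"
    using assms by (simp add: le_floor_iff)
  then have "real (nat \<lfloor>x\<rfloor>) = of_int \<lfloor>x\<rfloor>" "0 < nat \<lfloor>x\<rfloor>" "1 \<le> real (nat \<lfloor>x\<rfloor>)"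
    by simp_all
  moreover have "of_int \<lfloor>x\<rfloor> \<le> x" "x < of_int \<lfloor>x\<rfloor> + 1"
    by simp_all
  ultimately show "0 < nat \<lfloor>x\<rfloor>" "real (nat \<lfloor>x\<rfloor>) \<le> x" "x \<le> 2 * real (nat \<lfloor>x\<rfloor>)"
    by linarith+
qed

lemma cube_root_ratio:
  fixes K T :: nat and q :: real
  assumes "0 < K" "K < T"
  defines "q \<equiv> (real T / real K) powr (1/3)"
  shows "1 < q" "real T = K * q ^ 3" "K * q\<^sup>2 = K powr (1/3) * T powr (2/3)"
proof -
  have "0 < q"
    using assms by (simp add: q_def)
  have "q ^ 3 = real T / real K"
    using assms by (simp add: q_def powr_realpow[symmetric] powr_powr)
  then show T_eq: "real T = K * q ^ 3"
    using assms by (simp add: field_simps)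
  show "1 < q"
  proof (rule ccontr)
    assume "\<not> 1 < q"
    then have "q ^ 3 \<le> 1"
      using \<open>0 < q\<close> by (intro power_le_one) auto
    then have "real T \<le> real K"
      using T_eq mult_left_mono[of "q ^ 3" 1 "real K"] by simp
    with assms(2) show False
      by simp
  qed
  have "q\<^sup>2 = T powr (2/3) / K powr (2/3)"
    using assms by (simp add: q_def powr_realpow[symmetric] powr_powr powr_divide)
  moreover have "real K = K powr (1/3) * K powr (2/3)"
    using assms by (simp flip: powr_add)
  ultimately have "K * q\<^sup>2 = K powr (1/3) * K powr (2/3) * (T powr (2/3) / K powr (2/3))"
    by simp
  also have "\<dots> = K powr (1/3) * T powr (2/3)"
    using assms by simp
  finally show "K * q\<^sup>2 = K powr (1/3) * T powr (2/3)" .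
qed

lemma explore_commit_tradeoff:
  fixes K T m :: nat and q :: real
  assumes "2 \<le> K" "0 < q" "real T = K * q ^ 3" "0 < m" "real m \<le> q\<^sup>2" "q\<^sup>2 \<le> 2 * real m"
  shows "real m * K + T * (ln K / q + q / (8 * real m)) \<le> 3 * (K * q\<^sup>2 * ln K)"
proof -
  have "ln 2 \<le> ln (real K)"
    using assms(1) by simp
  then have "2/3 \<le> ln (real K)"
    using ln2_ge_two_thirds by linarith
  define A where "A = K * q\<^sup>2"
  have "real m * K \<le> A"
    using assms(5) by (simp add: A_def mult_left_mono mult.commute)
  moreover have "T * (ln K / q) = A * ln K"
    using assms(2,3) by (simp add: A_def power2_eq_square power3_eq_cube)
  moreover have "T * (q / (8 * real m)) = A * (q\<^sup>2 / (8 * real m))"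
    using assms(3) by (simp add: A_def power2_eq_square power3_eq_cube)
  moreover have "A * (q\<^sup>2 / (8 * real m)) \<le> A * (1 / 4)"
    using assms(4,6) by (intro mult_left_mono) (auto simp: A_def field_simps)
  moreover have "A * (5 / 8) \<le> A * ln K"
    using \<open>2/3 \<le> ln K\<close> by (intro mult_left_mono) (auto simp: A_def)
  moreover have "T * (ln K / q + q / (8 * real m)) = T * (ln K / q) + T * (q / (8 * real m))"
    by (rule distrib_left)
  ultimately show ?thesis
    unfolding A_def by linarith
qed

lemma etc_policy_guarantee:
  fixes K T :: nat
  assumes "0 < K" "K < T"
  obtains m where "valid_policy K T (etc_policy K m)"
    and "\<And>D. bandit_instance D K \<Longrightarrow>
      realized_regret D K T (etc_policy K m) \<in> borel_measurable (reward_space D K T)"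
    and "\<And>D. bandit_instance D K \<Longrightarrow>
      (\<integral>\<omega>. realized_regret D K T (etc_policy K m) \<omega> \<partial>reward_space D K T)
        \<le> 3 * K powr (1/3) * T powr (2/3) * ln K"
proof -
  define q where "q = (real T / real K) powr (1/3)"
  define m where "m = nat \<lfloor>q\<^sup>2\<rfloor>"
  have q: "1 < q" "real T = K * q ^ 3" "K * q\<^sup>2 = K powr (1/3) * T powr (2/3)"
    unfolding q_def using assms by (rule cube_root_ratio)+
  have "1 \<le> q\<^sup>2"
    using q(1) by simp
  then have m: "0 < m" "real m \<le> q\<^sup>2" "q\<^sup>2 \<le> 2 * real m"
    unfolding m_def by (rule nat_floor_bounds)+
  have "real (K * m) \<le> K * q\<^sup>2"
    using m(2) by (simp add: mult_left_mono)
  also have "\<dots> < K * q ^ 3"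
    using assms q(1) by (simp add: power_strict_increasing)
  finally have "K * m < T"
    using q(2) by linarith
  then have run: "etc_run D K T m" if "bandit_instance D K" for D
    using that assms m(1) by unfold_locales
  have "(\<integral>\<omega>. realized_regret D K T (etc_policy K m) \<omega> \<partial>reward_space D K T)
      \<le> 3 * K powr (1/3) * T powr (2/3) * ln K" if "bandit_instance D K" for D
  proof -
    interpret etc_run D K T m
      using run[OF that] .
    show ?thesis
    proof (cases "K = 1")
      case True
      then have "realized_regret D K T (etc_policy K m) = (\<lambda>_. 0)"
        by (intro ext realized_regret_single_arm)
      then show ?thesis
        using True by simp
    next
      case False
      then have "real m * K + T * (ln K / q + q / (8 * real m)) \<le> 3 * K powr (1/3) * T powr (2/3) * ln K"
        using explore_commit_tradeoff[of K q T m] q m assms(1) by simp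
      then show ?thesis
        using expected_regret_le[of q] q(1) by simp
    qed
  qed
  with that[of m] show thesis
    using valid_policy_etc_policy[OF assms(1) \<open>K * m < T\<close>] etc_run.realized_regret_measurable[OF run]
    by blast
qed

theorem proposition5p3:
  shows "\<exists>C::real. \<forall>K T::nat. 1 \<le> K \<and> K < T \<longrightarrow>
    (\<exists>A :: policy pmf.
       (\<forall>\<pi>\<in>set_pmf A. valid_policy K T \<pi>) \<and>
       (\<forall>D. bandit_instance D K \<longrightarrow>
          (\<forall>\<pi>\<in>set_pmf A. realized_regret D K T \<pi> \<in> borel_measurable (reward_space D K T)) \<and>
          measure_pmf.expectation A
             (\<lambda>\<pi>. \<integral>\<omega>. realized_regret D K T \<pi> \<omega> \<partial>(reward_space D K T))
            \<le> C * real K powr (1/3) * real T powr (2/3) * ln (real K)))"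
proof (intro exI[of _ 3] allI impI)
  fix K T :: nat
  assume "1 \<le> K \<and> K < T"
  then have "0 < K" "K < T"
    by auto
  then obtain m where "valid_policy K T (etc_policy K m)"
    and "\<And>D. bandit_instance D K \<Longrightarrow>
      realized_regret D K T (etc_policy K m) \<in> borel_measurable (reward_space D K T)"
    and "\<And>D. bandit_instance D K \<Longrightarrow>
      (\<integral>\<omega>. realized_regret D K T (etc_policy K m) \<omega> \<partial>reward_space D K T)
        \<le> 3 * K powr (1/3) * T powr (2/3) * ln K"
    using etc_policy_guarantee by blast
  then show "\<exists>A :: policy pmf.
       (\<forall>\<pi>\<in>set_pmf A. valid_policy K T \<pi>) \<and>
       (\<forall>D. bandit_instance D K \<longrightarrow>
          (\<forall>\<pi>\<in>set_pmf A. realized_regret D K T \<pi> \<in> borel_measurable (reward_space D K T)) \<and>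
          measure_pmf.expectation A
             (\<lambda>\<pi>. \<integral>\<omega>. realized_regret D K T \<pi> \<omega> \<partial>(reward_space D K T))
            \<le> 3 * real K powr (1/3) * real T powr (2/3) * ln (real K))"
    by (intro exI[of _ "return_pmf (etc_policy K m)"]) simp
qed

end
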